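(* Let $\mathcal{E}=\{\eta_i,\rho_i\}_{i=1}^n$ be an $m$-party quantum state ensemble and let $x\in\{1,\dots,n\}$. Then $p_{\sf L}(\mathcal{E})=\eta_x$ if and only if $\eta_x\rho_x-\eta_i\rho_i\in\mathbb{SEP}^*$ for all $i=1,\dots,n$. Moreover, in this case $p_{\sf L}(\mathcal{E})=p_{\sf SEP}(\mathcal{E})$.
   Context: Let $\mathcal{H}=\bigotimes_{k=1}^m\mathbb{C}^{d_k}$ with $m,d_1,\dots,d_m\ge 2$, shared among parties $\mathsf{A}_1,\dots,\mathsf{A}_m$ (party $\mathsf{A}_k$ holds the factor $\mathbb{C}^{d_k}$). $\mathbb{H}$ denotes the Hermitian operators on $\mathcal{H}$, $\mathbb{H}_+$ the positive semidefinite ones. A state is $\rho\in\mathbb{H}_+$ with $\operatorname{Tr}\rho=1$; a measurement is a family $\{M_i\}\subseteq\mathbb{H}_+$ with $\sum_i M_i=\mathbb{1}$. An operator $E\in\mathbb{H}_+$ is separable if $E=\sum_s\bigotimes_{k=1}^m E_{s,k}$ with each $E_{s,k}$ positive semidefinite on $\mathbb{C}^{d_k}$; $\mathbb{SEP}$ is the set of separable operators. $E\in\mathbb{H}$ is block positive if $\operatorname{Tr}(E\sigma)\ge 0$ for every separable state $\sigma$; $\mathbb{SEP}^*$ is the set of block-positive operators. A measurement is separable if all its elements are separable, and LOCC if it can be realized by local operations and classical communication among $\mathsf{A}_1,\dots,\mathsf{A}_m$. An ensemble $\mathcal{E}=\{\eta_i,\rho_i\}_{i=1}^n$ consists of states $\rho_i$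 with nonzero probabilities $\eta_i$ summing to $1$. For a measurement $\{M_i\}_{i=1}^n$ the success probability is $\sum_i\eta_i\operatorname{Tr}(\rho_iM_i)$; $p_{\sf G}(\mathcal{E})$, $p_{\sf SEP}(\mathcal{E})$, $p_{\sf L}(\mathcal{E})$ denote its maximum over all measurements, all separable measurements, and all LOCC measurements, respectively. *)

theory Defs
  imports Complex_Main
begin

text \<open>Operators are represented as complex-valued kernels A i j over an index set S
  (finite-dimensional matrices indexed by S). The global Hilbert space
  C^{d_0} tensor ... tensor C^{d_(m-1)} is indexed by multi-indices f with f k < d k for k < m
  and f k = 0 for k >= m. Parties are numbered 0..m-1, outcomes 0..n-1.\<close>

type_synonym 'a mat = "'a \<Rightarrow> 'a \<Rightarrow> complex"

definition idx :: "nat \<Rightarrow> (nat \<Rightarrow> nat) \<Rightarrow> (nat \<Rightarrow> nat) set" where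
  "idx m d = {f. (\<forall>k<m. f k < d k) \<and> (\<forall>k\<ge>m. f k = 0)}"

definition supp_on :: "'a set \<Rightarrow> 'a mat \<Rightarrow> bool" where
  "supp_on S A \<longleftrightarrow> (\<forall>i j. i \<notin> S \<or> j \<notin> S \<longrightarrow> A i j = 0)"

definition herm_on :: "'a set \<Rightarrow> 'a mat \<Rightarrow> bool" where
  "herm_on S A \<longleftrightarrow> supp_on S A \<and> (\<forall>i j. A i j = cnj (A j i))"

definition psd_on :: "'a set \<Rightarrow> 'a mat \<Rightarrow> bool" where
  "psd_on S A \<longleftrightarrow> herm_on S A \<and>
     (\<forall>v :: 'a \<Rightarrow> complex. 0 \<le> Re (\<Sum>i\<in>S. \<Sum>j\<in>S. cnj (v i) * A i j * v j))"

definition id_on :: "'a set \<Rightarrow> 'a mat" where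
  "id_on S = (\<lambda>i j. if i = j \<and> i \<in> S then 1 else 0)"

definition mmult_on :: "'a set \<Rightarrow> 'a mat \<Rightarrow> 'a mat \<Rightarrow> 'a mat" where
  "mmult_on S A B = (\<lambda>i j. \<Sum>l\<in>S. A i l * B l j)"

definition adj :: "'a mat \<Rightarrow> 'a mat" where
  "adj A = (\<lambda>i j. cnj (A j i))"

definition tr_on :: "'a set \<Rightarrow> 'a mat \<Rightarrow> complex" where
  "tr_on S A = (\<Sum>i\<in>S. A i i)"

definition tensor :: "nat \<Rightarrow> (nat \<Rightarrow> nat) \<Rightarrow> (nat \<Rightarrow> nat mat) \<Rightarrow> (nat \<Rightarrow> nat) mat" where
  "tensor m d E = (\<lambda>i j. if i \<in> idx m d \<and> j \<in> idx m d then (\<Prod>k<m. E k (i k) (j k)) else 0)"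

definition local_op :: "nat \<Rightarrow> (nat \<Rightarrow> nat) \<Rightarrow> nat \<Rightarrow> nat mat \<Rightarrow> (nat \<Rightarrow> nat) mat" where
  "local_op m d k K = tensor m d (\<lambda>l. if l = k then K else id_on {..<d l})"

definition is_state :: "nat \<Rightarrow> (nat \<Rightarrow> nat) \<Rightarrow> (nat \<Rightarrow> nat) mat \<Rightarrow> bool" where
  "is_state m d \<rho> \<longleftrightarrow> psd_on (idx m d) \<rho> \<and> tr_on (idx m d) \<rho> = 1"

definition separable :: "nat \<Rightarrow> (nat \<Rightarrow> nat) \<Rightarrow> (nat \<Rightarrow> nat) mat \<Rightarrow> bool" where
  "separable m d E \<longleftrightarrow> psd_on (idx m d) E \<and>
     (\<exists>(N::nat) (F :: nat \<Rightarrow> nat \<Rightarrow> nat mat).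
        (\<forall>s<N. \<forall>k<m. psd_on {..<d k} (F s k)) \<and>
        E = (\<lambda>i j. \<Sum>s<N. tensor m d (F s) i j))"

text \<open>Block-positive operators (the dual cone SEP^*).\<close>
definition block_positive :: "nat \<Rightarrow> (nat \<Rightarrow> nat) \<Rightarrow> (nat \<Rightarrow> nat) mat \<Rightarrow> bool" where
  "block_positive m d E \<longleftrightarrow> herm_on (idx m d) E \<and>
     (\<forall>\<sigma>. separable m d \<sigma> \<and> tr_on (idx m d) \<sigma> = 1 \<longrightarrow>
        0 \<le> Re (tr_on (idx m d) (mmult_on (idx m d) E \<sigma>)))"

definition measurement :: "nat \<Rightarrow> (nat \<Rightarrow> nat) \<Rightarrow> nat \<Rightarrow> (nat \<Rightarrow> (nat \<Rightarrow> nat) mat) \<Rightarrow> bool" where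
  "measurement m d n M \<longleftrightarrow> (\<forall>i<n. psd_on (idx m d) (M i)) \<and>
     (\<lambda>a b. \<Sum>i<n. M i a b) = id_on (idx m d)"

definition sep_measurement :: "nat \<Rightarrow> (nat \<Rightarrow> nat) \<Rightarrow> nat \<Rightarrow> (nat \<Rightarrow> (nat \<Rightarrow> nat) mat) \<Rightarrow> bool" where
  "sep_measurement m d n M \<longleftrightarrow> measurement m d n M \<and> (\<forall>i<n. separable m d (M i))"

text \<open>LOCC measurements (finite-round protocols), defined recursively:
  either output a fixed outcome i, or some party k performs a local instrument with
  Kraus operators K 0, ..., K (r-1) on C^{d k} (sum of K_j^* K_j = identity), broadcasts
  the result j, and the parties continue with an LOCC protocol F j depending on j.\<close>
inductive_set locc :: "nat \<Rightarrow> (nat \<Rightarrow> nat) \<Rightarrow> nat \<Rightarrow> (nat \<Rightarrow> (nat \<Rightarrow> nat) mat) set"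
  for m :: nat and d :: "nat \<Rightarrow> nat" and n :: nat where
  outcome: "i < n \<Longrightarrow> (\<lambda>j. if j = i then id_on (idx m d) else (\<lambda>_ _. (0::complex))) \<in> locc m d n"
| step: "\<lbrakk> k < m;
          \<forall>j<(r::nat). supp_on {..<d k} (K j);
          (\<lambda>a b. \<Sum>j<r. mmult_on {..<d k} (adj (K j)) (K j) a b) = id_on {..<d k};
          \<forall>j<r. F j \<in> locc m d n \<rbrakk> \<Longrightarrow>
        (\<lambda>i a b. \<Sum>j<r. mmult_on (idx m d)
                   (mmult_on (idx m d) (adj (local_op m d k (K j))) (F j i))
                   (local_op m d k (K j)) a b) \<in> locc m d n"

definition locc_measurement :: "nat \<Rightarrow> (nat \<Rightarrow> nat) \<Rightarrow> nat \<Rightarrow> (nat \<Rightarrow> (nat \<Rightarrow> nat) mat) \<Rightarrow> bool" where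
  "locc_measurement m d n M \<longleftrightarrow> M \<in> locc m d n"

definition ensemble :: "nat \<Rightarrow> (nat \<Rightarrow> nat) \<Rightarrow> nat \<Rightarrow> (nat \<Rightarrow> real) \<Rightarrow> (nat \<Rightarrow> (nat \<Rightarrow> nat) mat) \<Rightarrow> bool" where
  "ensemble m d n \<eta> \<rho> \<longleftrightarrow> (\<forall>i<n. \<eta> i > 0 \<and> is_state m d (\<rho> i)) \<and> (\<Sum>i<n. \<eta> i) = 1"

definition success :: "nat \<Rightarrow> (nat \<Rightarrow> nat) \<Rightarrow> nat \<Rightarrow> (nat \<Rightarrow> real) \<Rightarrow> (nat \<Rightarrow> (nat \<Rightarrow> nat) mat)
    \<Rightarrow> (nat \<Rightarrow> (nat \<Rightarrow> nat) mat) \<Rightarrow> real" where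
  "success m d n \<eta> \<rho> M = (\<Sum>i<n. \<eta> i * Re (tr_on (idx m d) (mmult_on (idx m d) (\<rho> i) (M i))))"

definition p_G where
  "p_G m d n \<eta> \<rho> = Sup (success m d n \<eta> \<rho> ` {M. measurement m d n M})"

definition p_SEP where
  "p_SEP m d n \<eta> \<rho> = Sup (success m d n \<eta> \<rho> ` {M. sep_measurement m d n M})"

definition p_L where
  "p_L m d n \<eta> \<rho> = Sup (success m d n \<eta> \<rho> ` {M. locc_measurement m d n M})"

end

theory Submission
  imports Defs
begin

(*
  If every eta_x rho_x - eta_i rho_i is block positive, then for any separable measurement M
  the defect eta_x - success(M) = sum_i Tr((eta_x rho_x - eta_i rho_i) M_i) is nonnegative.
  Every LOCC measurement is separable (separability survives local Kraus conjugations and sums),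
  and always answering x is LOCC with success eta_x, so p_L = p_SEP = eta_x.

  Conversely, if eta_x rho_x - eta_y rho_y is not block positive, some separable state, and hence
  (splitting every local PSD factor into rank-one terms by a Cholesky-type decomposition) some
  product of rank-one projections |u_1><u_1| (x) ... (x) |u_m><u_m|, gives it a negative expectation.
  Let the parties measure {|u_k><u_k|, 1 - |u_k><u_k|} one after the other, answering y if all of
  them obtain the first outcome and x otherwise: this LOCC measurement succeeds with probability
  eta_x - Tr((eta_x rho_x - eta_y rho_y) P) > eta_x.
*)

lemma mmult_on_sum_right:
  "mmult_on S A (\<lambda>a b. \<Sum>t\<in>T. G t a b) = (\<lambda>a b. \<Sum>t\<in>T. mmult_on S A (G t) a b)"
  unfolding mmult_on_def by (auto simp: sum_distrib_left intro!: ext sum.swap)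

lemma mmult_on_sum_left:
  "mmult_on S (\<lambda>a b. \<Sum>t\<in>T. G t a b) A = (\<lambda>a b. \<Sum>t\<in>T. mmult_on S (G t) A a b)"
  unfolding mmult_on_def by (auto simp: sum_distrib_right intro!: ext sum.swap)

lemma tr_on_sum: "tr_on S (\<lambda>a b. \<Sum>t\<in>T. G t a b) = (\<Sum>t\<in>T. tr_on S (G t))"
  unfolding tr_on_def by (rule sum.swap)

lemma mmult_on_diff_left:
  "mmult_on S (\<lambda>a b. X a b - Y a b) Z = (\<lambda>a b. mmult_on S X Z a b - mmult_on S Y Z a b)"
  unfolding mmult_on_def by (auto simp: algebra_simps sum_subtractf)

lemma mmult_on_diff_right:
  "mmult_on S Z (\<lambda>a b. X a b - Y a b) = (\<lambda>a b. mmult_on S Z X a b - mmult_on S Z Y a b)"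
  unfolding mmult_on_def by (auto simp: algebra_simps sum_subtractf)

lemma mmult_on_scale_right:
  "mmult_on S X (\<lambda>a b. c * Y a b) = (\<lambda>a b. c * mmult_on S X Y a b)"
  unfolding mmult_on_def by (simp add: sum_distrib_left mult_ac)

lemma tr_on_scale: "tr_on S (\<lambda>a b. c * X a b) = c * tr_on S X"
  unfolding tr_on_def by (simp add: sum_distrib_left)

lemma mmult_on_zero_left [simp]: "mmult_on S (\<lambda>a b. 0) X = (\<lambda>a b. 0)"
  unfolding mmult_on_def by simp

lemma mmult_on_zero_right [simp]: "mmult_on S X (\<lambda>a b. 0) = (\<lambda>a b. 0)"
  unfolding mmult_on_def by simp

lemma tr_on_zero [simp]: "tr_on S (\<lambda>a b. 0) = 0"
  unfolding tr_on_def by simp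

lemma tr_on_mmult_combination:
  "tr_on S (mmult_on S (\<lambda>a b. of_real c * A a b - of_real c' * B a b) M)
   = of_real c * tr_on S (mmult_on S A M) - of_real c' * tr_on S (mmult_on S B M)"
  unfolding tr_on_def mmult_on_def by (simp add: algebra_simps sum_subtractf sum_distrib_left)

lemma supp_on_id_on: "supp_on S (id_on S)"
  unfolding supp_on_def id_on_def by auto

lemma mmult_on_id_left:
  assumes "finite S" "supp_on S X"
  shows "mmult_on S (id_on S) X = X"
proof (intro ext)
  fix i j
  have "mmult_on S (id_on S) X i j = (\<Sum>l\<in>S. if l = i then X i j else 0)"
    unfolding mmult_on_def id_on_def by (rule sum.cong) auto
  then show "mmult_on S (id_on S) X i j = X i j"
    using assms unfolding supp_on_def by (cases "i \<in> S") auto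
qed

lemma mmult_on_id_right:
  assumes "finite S" "supp_on S X"
  shows "mmult_on S X (id_on S) = X"
proof (intro ext)
  fix i j
  have "mmult_on S X (id_on S) i j = (\<Sum>l\<in>S. if l = j then X i j else 0)"
    unfolding mmult_on_def id_on_def by (rule sum.cong) auto
  then show "mmult_on S X (id_on S) i j = X i j"
    using assms unfolding supp_on_def by (cases "j \<in> S") auto
qed

lemma tr_on_mmult_id:
  assumes "finite S"
  shows "tr_on S (mmult_on S X (id_on S)) = tr_on S X"
proof -
  have "mmult_on S X (id_on S) a a = X a a" if "a \<in> S" for a
  proof -
    have "mmult_on S X (id_on S) a a = (\<Sum>l\<in>S. if l = a then X a a else 0)"
      unfolding mmult_on_def id_on_def by (rule sum.cong) auto
    then show ?thesis using that assms by simp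
  qed
  then show ?thesis unfolding tr_on_def by simp
qed

lemma tr_on_mmult_sum_eq_id:
  assumes "finite S" "(\<lambda>a b. \<Sum>y\<in>Y. M y a b) = id_on S"
  shows "(\<Sum>y\<in>Y. tr_on S (mmult_on S X (M y))) = tr_on S X"
  using tr_on_mmult_id[OF assms(1)] unfolding assms(2)[symmetric] mmult_on_sum_right tr_on_sum .

section \<open>Positive semidefinite kernels\<close>

definition quad_form :: "'a set \<Rightarrow> 'a mat \<Rightarrow> ('a \<Rightarrow> complex) \<Rightarrow> complex" where
  "quad_form S A v = (\<Sum>i\<in>S. \<Sum>j\<in>S. cnj (v i) * A i j * v j)"

definition rank_one :: "('a \<Rightarrow> complex) \<Rightarrow> 'a mat" where
  "rank_one u = (\<lambda>i j. u i * cnj (u j))"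

lemma psd_on_supp: "psd_on S A \<Longrightarrow> supp_on S A"
  unfolding psd_on_def herm_on_def by blast

lemma psd_on_herm: "psd_on S A \<Longrightarrow> A i j = cnj (A j i)"
  unfolding psd_on_def herm_on_def by blast

lemma psd_on_cnj: "psd_on S A \<Longrightarrow> cnj (A i j) = A j i"
  using psd_on_herm[of S A j i] by simp

lemma psd_on_quad_form: "psd_on S A \<Longrightarrow> 0 \<le> Re (quad_form S A v)"
  unfolding psd_on_def quad_form_def by blast

lemma psd_onI:
  assumes "supp_on S A" "\<And>i j. A i j = cnj (A j i)" "\<And>v. 0 \<le> Re (quad_form S A v)"
  shows "psd_on S A"
  using assms unfolding psd_on_def herm_on_def quad_form_def by blast

lemma quad_form_rank_one:
  "quad_form S (rank_one u) v = (\<Sum>i\<in>S. cnj (v i) * u i) * (\<Sum>j\<in>S. cnj (u j) * v j)"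
  unfolding quad_form_def rank_one_def sum_product by (intro sum.cong refl) (simp add: mult_ac)

lemma psd_on_rank_one:
  assumes "\<And>i. i \<notin> S \<Longrightarrow> u i = 0"
  shows "psd_on S (rank_one u)"
proof (rule psd_onI)
  show "supp_on S (rank_one u)" using assms unfolding supp_on_def rank_one_def by auto
  show "rank_one u i j = cnj (rank_one u j i)" for i j unfolding rank_one_def by simp
  show "0 \<le> Re (quad_form S (rank_one u) v)" for v
  proof -
    have "(\<Sum>j\<in>S. cnj (u j) * v j) = cnj (\<Sum>i\<in>S. cnj (v i) * u i)"
      by (simp add: mult.commute)
    moreover have "0 \<le> Re (z * cnj z)" for z by (simp add: complex_mult_cnj)
    ultimately show ?thesis unfolding quad_form_rank_one by metis
  qed
qed

lemma psd_on_id_on: "psd_on S (id_on S)"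
proof (rule psd_onI)
  show "supp_on S (id_on S)" by (rule supp_on_id_on)
  show "id_on S i j = cnj (id_on S j i)" for i j unfolding id_on_def by auto
  show "0 \<le> Re (quad_form S (id_on S) v)" for v
  proof (cases "finite S")
    case True
    have "quad_form S (id_on S) v = (\<Sum>i\<in>S. cnj (v i) * v i)"
      unfolding quad_form_def id_on_def using True
      by (intro sum.cong refl) (simp add: if_distrib[where f="\<lambda>x. _ * x * _"] sum.delta cong: if_cong)
    then show ?thesis by (simp add: sum_nonneg)
  qed (simp add: quad_form_def)
qed

lemma psd_on_zero: "psd_on S (\<lambda>_ _. 0)"
  unfolding psd_on_def herm_on_def supp_on_def by simp

lemma psd_on_scale:
  assumes "psd_on S A" "0 \<le> c"
  shows "psd_on S (\<lambda>a b. complex_of_real c * A a b)"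
proof (rule psd_onI)
  show "supp_on S (\<lambda>a b. complex_of_real c * A a b)"
    using psd_on_supp[OF assms(1)] unfolding supp_on_def by simp
  show "complex_of_real c * A i j = cnj (complex_of_real c * A j i)" for i j
    using psd_on_cnj[OF assms(1)] by simp
  show "0 \<le> Re (quad_form S (\<lambda>a b. complex_of_real c * A a b) v)" for v
  proof -
    have "quad_form S (\<lambda>a b. complex_of_real c * A a b) v = complex_of_real c * quad_form S A v"
      unfolding quad_form_def by (simp add: sum_distrib_left mult_ac)
    then show ?thesis using psd_on_quad_form[OF assms(1), of v] assms(2) by simp
  qed
qed

lemma psd_on_add:
  assumes "psd_on S A" "psd_on S B"
  shows "psd_on S (\<lambda>a b. A a b + B a b)"
proof (rule psd_onI)
  show "supp_on S (\<lambda>a b. A a b + B a b)"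
    using psd_on_supp[OF assms(1)] psd_on_supp[OF assms(2)] unfolding supp_on_def by simp
  show "A i j + B i j = cnj (A j i + B j i)" for i j
    using psd_on_cnj[OF assms(1)] psd_on_cnj[OF assms(2)] by simp
  show "0 \<le> Re (quad_form S (\<lambda>a b. A a b + B a b) v)" for v
  proof -
    have "quad_form S (\<lambda>a b. A a b + B a b) v = quad_form S A v + quad_form S B v"
      unfolding quad_form_def by (simp add: algebra_simps sum.distrib)
    then show ?thesis using psd_on_quad_form[OF assms(1)] psd_on_quad_form[OF assms(2)] by simp
  qed
qed

lemma sum_mult_inner_sum_swap:
  "(\<Sum>l\<in>S. X l * (\<Sum>j\<in>T. Y l j * v j)) = (\<Sum>j\<in>T. (\<Sum>l\<in>S. X l * Y l j) * (v j :: complex))"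
proof -
  have "(\<Sum>l\<in>S. X l * (\<Sum>j\<in>T. Y l j * v j)) = (\<Sum>l\<in>S. \<Sum>j\<in>T. X l * Y l j * v j)"
    by (simp add: sum_distrib_left mult.assoc)
  also have "\<dots> = (\<Sum>j\<in>T. \<Sum>l\<in>S. X l * Y l j * v j)" by (rule sum.swap)
  finally show ?thesis by (simp add: sum_distrib_right)
qed

lemma quad_form_altdef: "quad_form S A v = (\<Sum>i\<in>S. cnj (v i) * (\<Sum>j\<in>S. A i j * v j))"
  unfolding quad_form_def by (simp add: sum_distrib_left mult.assoc)

lemma mmult_on_adj_conj_apply:
  "mmult_on S (mmult_on S (adj B) A) B i j = (\<Sum>l'\<in>S. \<Sum>l\<in>S. cnj (B l' i) * A l' l * B l j)"
  unfolding mmult_on_def adj_def sum_distrib_right by (rule sum.swap)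

lemma quad_form_conj:
  "quad_form S (mmult_on S (mmult_on S (adj B) A) B) v = quad_form S A (\<lambda>l. \<Sum>j\<in>S. B l j * v j)"
proof -
  define u where "u l = (\<Sum>j\<in>S. B l j * v j)" for l
  define Au where "Au l' = (\<Sum>l\<in>S. A l' l * u l)" for l'
  have row: "(\<Sum>j\<in>S. mmult_on S (mmult_on S (adj B) A) B i j * v j) = (\<Sum>l'\<in>S. cnj (B l' i) * Au l')"
    for i
  proof -
    have "(\<Sum>j\<in>S. mmult_on S (mmult_on S (adj B) A) B i j * v j)
        = (\<Sum>l\<in>S. mmult_on S (adj B) A i l * u l)"
      unfolding u_def sum_mult_inner_sum_swap by (simp add: mmult_on_def)
    also have "\<dots> = (\<Sum>l'\<in>S. cnj (B l' i) * Au l')"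
      unfolding Au_def sum_mult_inner_sum_swap by (simp add: mmult_on_def adj_def)
    finally show ?thesis .
  qed
  have "quad_form S (mmult_on S (mmult_on S (adj B) A) B) v
      = (\<Sum>l'\<in>S. (\<Sum>i\<in>S. cnj (v i) * cnj (B l' i)) * Au l')"
    unfolding quad_form_altdef row by (rule sum_mult_inner_sum_swap)
  also have "\<dots> = quad_form S A u"
    unfolding quad_form_altdef Au_def u_def by (simp add: mult.commute)
  finally show ?thesis unfolding u_def .
qed

lemma psd_on_conj:
  assumes "psd_on S A" "supp_on S B"
  shows "psd_on S (mmult_on S (mmult_on S (adj B) A) B)"
proof (rule psd_onI)
  let ?M = "mmult_on S (mmult_on S (adj B) A) B"
  show "supp_on S ?M" using assms(2) unfolding supp_on_def mmult_on_adj_conj_apply by auto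
  show "?M i j = cnj (?M j i)" for i j
  proof -
    have "cnj (?M j i) = (\<Sum>l'\<in>S. \<Sum>l\<in>S. B l' j * A l l' * cnj (B l i))"
      unfolding mmult_on_adj_conj_apply by (simp add: psd_on_cnj[OF assms(1)])
    also have "\<dots> = ?M i j"
      unfolding mmult_on_adj_conj_apply by (subst sum.swap) (simp add: mult_ac)
    finally show ?thesis by simp
  qed
  show "0 \<le> Re (quad_form S ?M v)" for v
    unfolding quad_form_conj by (rule psd_on_quad_form[OF assms(1)])
qed

lemma quad_form_insert:
  assumes "finite S" "a \<notin> S"
  shows "quad_form (insert a S) A (v(a := t)) = quad_form S A v + cnj t * (\<Sum>j\<in>S. A a j * v j)
          + (\<Sum>i\<in>S. cnj (v i) * A i a) * t + cnj t * A a a * t"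
proof -
  have "i \<in> S \<Longrightarrow> (i = a) = False" for i using assms by auto
  then show ?thesis
    unfolding quad_form_def using assms
    by (simp add: sum.distrib sum_distrib_left sum_distrib_right cong: sum.cong)
      (simp add: algebra_simps)
qed

lemma psd_on_insert_nonneg:
  fixes v :: "'a \<Rightarrow> complex" and t :: complex
  assumes "finite S" "a \<notin> S" "psd_on (insert a S) A"
  defines "s \<equiv> (\<Sum>j\<in>S. A a j * v j)"
  shows "0 \<le> Re (quad_form S A v + cnj t * s + cnj s * t + cnj t * A a a * t)"
proof -
  have "(\<Sum>i\<in>S. cnj (v i) * A i a) = cnj s"
    unfolding s_def by (simp add: psd_on_cnj[OF assms(3)] mult.commute)
  then show ?thesis
    using psd_on_quad_form[OF assms(3), of "v(a := t)"] quad_form_insert[OF assms(1,2)]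
    unfolding s_def by simp
qed

lemma psd_on_diag_real: "psd_on S A \<Longrightarrow> A a a = of_real (Re (A a a))"
  using psd_on_herm[of S A a a] by (simp add: complex_eq_iff)

lemma quad_form_delta:
  assumes "finite S" "j \<in> S"
  shows "quad_form S A (\<lambda>i. if i = j then 1 else 0) = A j j"
  unfolding quad_form_def using assms
  by (simp add: if_distrib[where f="\<lambda>x. _ * x"] if_distrib[where f="\<lambda>x. cnj x * _"] sum.delta
      cong: if_cong)

lemma psd_on_diag_nonneg:
  assumes "finite S" "psd_on S A"
  shows "0 \<le> Re (A a a)"
proof (cases "a \<in> S")
  case True
  then show ?thesis using psd_on_quad_form[OF assms(2)] quad_form_delta[OF assms(1)] by metis
next
  case False
  then show ?thesis using psd_on_supp[OF assms(2)] unfolding supp_on_def by simp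
qed

lemma psd_on_zero_diag_row:
  assumes "finite S" "a \<notin> S" "psd_on (insert a S) A" "A a a = 0"
  shows "A a j = 0"
proof (cases "j \<in> S")
  case False
  then show ?thesis using assms(4) psd_on_supp[OF assms(3)] unfolding supp_on_def
    by (cases "j = a") auto
next
  case True
  define z where "z = A a j"
  have ineq: "0 \<le> Re (A j j + cnj t * z + cnj z * t)" for t
    using psd_on_insert_nonneg[OF assms(1-3), of "\<lambda>i. if i = j then 1 else 0" t] True assms(1,4)
    by (simp add: quad_form_delta z_def if_distrib[where f="\<lambda>x. _ * x"] cong: if_cong)
  show ?thesis
  proof (rule ccontr)
    assume "A a j \<noteq> 0"
    then have z: "0 < cmod z" unfolding z_def by simp
    define R where "R = (Re (A j j) + 1) / (2 * (cmod z)\<^sup>2)"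
    have cm: "(cmod z)\<^sup>2 = Re z * Re z + Im z * Im z"
      using cmod_power2[of z] by (simp add: power2_eq_square)
    have "Re (cnj (- of_real R * z) * z + cnj z * (- of_real R * z)) = - 2 * R * (cmod z)\<^sup>2"
      by (simp add: cm algebra_simps)
    also have "\<dots> = - (Re (A j j) + 1)" unfolding R_def using z by simp
    finally show False using ineq[of "- of_real R * z"] by simp
  qed
qed

lemma psd_on_remove_zero_diag:
  assumes "finite S" "a \<notin> S" "psd_on (insert a S) A" "A a a = 0"
  shows "psd_on S A"
proof (rule psd_onI)
  have row: "A a j = 0" "A j a = 0" for j
    using psd_on_zero_diag_row[OF assms] psd_on_cnj[OF assms(3), of a j] by auto
  then show "supp_on S A"
    using psd_on_supp[OF assms(3)] unfolding supp_on_def by (metis insertE)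
  show "A i j = cnj (A j i)" for i j by (rule psd_on_herm[OF assms(3)])
  show "0 \<le> Re (quad_form S A v)" for v
    using psd_on_insert_nonneg[OF assms(1-3), of v 0] by simp
qed

lemma psd_on_remove_pos_diag:
  assumes "finite S" "a \<notin> S" "psd_on (insert a S) A" "r \<noteq> 0" "cnj r = r" "r * r = A a a"
  defines "w \<equiv> \<lambda>i. A i a / r"
  shows "psd_on S (\<lambda>i j. A i j - w i * cnj (w j))"
proof (rule psd_onI)
  have cw: "cnj (w i) = A a i / r" for i
    unfolding w_def using assms(5) psd_on_cnj[OF assms(3)] by simp
  have ww: "w i * cnj (w j) = A i a * A a j / A a a" for i j
    unfolding cw unfolding w_def assms(6)[symmetric] by simp
  have "A i j - w i * cnj (w j) = 0" if "i \<notin> S \<or> j \<notin> S" for i j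
  proof -
    have "i = a \<or> j = a \<or> A i j = 0 \<and> (A i a = 0 \<or> A a j = 0)"
      using that psd_on_supp[OF assms(3)] unfolding supp_on_def by auto
    then show ?thesis using assms(4,6) unfolding ww by auto
  qed
  then show "supp_on S (\<lambda>i j. A i j - w i * cnj (w j))" unfolding supp_on_def by blast
  show "A i j - w i * cnj (w j) = cnj (A j i - w j * cnj (w i))" for i j
    by (simp add: psd_on_cnj[OF assms(3)])
  show "0 \<le> Re (quad_form S (\<lambda>i j. A i j - w i * cnj (w j)) v)" for v
  proof -
    define s where "s = (\<Sum>j\<in>S. A a j * v j)"
    define t where "t = - s / (r * r)"
    have ct: "cnj t = - cnj s / (r * r)" unfolding t_def using assms(5) by simp
    have "quad_form S (\<lambda>i j. A i j - w i * cnj (w j)) v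
        = quad_form S A v - (\<Sum>i\<in>S. cnj (v i) * w i) * (\<Sum>j\<in>S. cnj (w j) * v j)"
      using quad_form_rank_one[of S w v]
      unfolding quad_form_def rank_one_def by (simp add: algebra_simps sum_subtractf)
    also have "(\<Sum>j\<in>S. cnj (w j) * v j) = s / r"
      unfolding s_def cw by (simp add: sum_divide_distrib)
    also have "(\<Sum>i\<in>S. cnj (v i) * w i) = cnj s / r"
      unfolding s_def w_def cnj_sum using assms(5)
      by (simp add: sum_divide_distrib psd_on_cnj[OF assms(3)] mult.commute)
    \<comment> \<open>complete the square: this is the value of the full form at \<open>v(a := t)\<close>\<close>
    also have "quad_form S A v - cnj s / r * (s / r)
        = quad_form S A v + cnj t * s + cnj s * t + cnj t * A a a * t"
      unfolding ct unfolding t_def assms(6)[symmetric] using assms(4) by (simp add: field_simps)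
    finally show ?thesis using psd_on_insert_nonneg[OF assms(1-3), of v t] unfolding s_def by metis
  qed
qed

lemma psd_on_remove_point:
  assumes "finite S" "a \<notin> S" "psd_on (insert a S) A"
  obtains w where "\<And>i. i \<notin> insert a S \<Longrightarrow> w i = 0" "psd_on S (\<lambda>i j. A i j - w i * cnj (w j))"
proof (cases "A a a = 0")
  case True
  then show ?thesis using that[of "\<lambda>_. 0"] psd_on_remove_zero_diag[OF assms] by simp
next
  case False
  define r where "r = complex_of_real (sqrt (Re (A a a)))"
  have "0 < Re (A a a)"
    using False psd_on_diag_real[OF assms(3), of a] psd_on_diag_nonneg[OF _ assms(3)] assms(1)
    by (metis finite_insert less_eq_real_def of_real_0)
  then have "r \<noteq> 0" "cnj r = r" "r * r = A a a"
    unfolding r_def using psd_on_diag_real[OF assms(3), of a]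
    by (simp_all add: of_real_mult[symmetric] del: of_real_mult)
  from psd_on_remove_pos_diag[OF assms this] show ?thesis
    using that[of "\<lambda>i. A i a / r"] psd_on_supp[OF assms(3)] unfolding supp_on_def by simp
qed

lemma psd_on_sum_rank_one:
  assumes "finite S" "psd_on S A"
  shows "\<exists>(N::nat) w. (\<forall>t<N. \<forall>i. i \<notin> S \<longrightarrow> w t i = 0) \<and> A = (\<lambda>i j. \<Sum>t<N. rank_one (w t) i j)"
  using assms
proof (induction S arbitrary: A rule: finite_induct)
  case empty
  have "A = (\<lambda>i j. \<Sum>t<(0::nat). rank_one (\<lambda>_. 0) i j)"
    using psd_on_supp[OF empty] unfolding supp_on_def by (simp add: fun_eq_iff)
  then show ?case by (intro exI[of _ "0::nat"] exI[of _ "\<lambda>_ _. 0"]) simp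
next
  case (insert a S A)
  obtain w where w: "\<And>i. i \<notin> insert a S \<Longrightarrow> w i = 0"
    and psd: "psd_on S (\<lambda>i j. A i j - w i * cnj (w j))"
    using psd_on_remove_point[OF insert.hyps insert.prems] by blast
  obtain N :: nat and w' where w': "\<forall>t<N. \<forall>i. i \<notin> S \<longrightarrow> w' t i = 0"
    and eq: "(\<lambda>i j. A i j - w i * cnj (w j)) = (\<lambda>i j. \<Sum>t<N. rank_one (w' t) i j)"
    using insert.IH[OF psd] by blast
  define W where "W t = (if t < N then w' t else w)" for t
  have "\<forall>t<Suc N. \<forall>i. i \<notin> insert a S \<longrightarrow> W t i = 0" unfolding W_def using w w' by auto
  moreover have "A = (\<lambda>i j. \<Sum>t<Suc N. rank_one (W t) i j)"
  proof (intro ext)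
    fix i j
    have "A i j = (\<Sum>t<N. rank_one (w' t) i j) + w i * cnj (w j)" using fun_cong[OF fun_cong[OF eq, of i], of j]
      by (simp add: algebra_simps)
    then show "A i j = (\<Sum>t<Suc N. rank_one (W t) i j)" unfolding W_def by (simp add: rank_one_def)
  qed
  ultimately show ?case by blast
qed

lemma tr_on_sum_rank_one:
  "tr_on S (\<lambda>i j. \<Sum>t<N. rank_one (w t) i j) = of_real (\<Sum>t<N. \<Sum>i\<in>S. (cmod (w t i))\<^sup>2)"
  unfolding tr_on_def rank_one_def complex_norm_square of_real_sum by (rule sum.swap)

lemma tr_on_psd:
  assumes "finite S" "psd_on S A"
  shows "tr_on S A = of_real (Re (tr_on S A))" "0 \<le> Re (tr_on S A)"
proof -
  obtain N :: nat and w where "A = (\<lambda>i j. \<Sum>t<N. rank_one (w t) i j)"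
    using psd_on_sum_rank_one[OF assms] by blast
  then show "tr_on S A = of_real (Re (tr_on S A))" "0 \<le> Re (tr_on S A)"
    by (simp_all add: tr_on_sum_rank_one sum_nonneg)
qed

lemma psd_on_tr_zero:
  assumes "finite S" "psd_on S A" "tr_on S A = 0"
  shows "A = (\<lambda>_ _. 0)"
proof -
  obtain N :: nat and w where w: "\<forall>t<N. \<forall>i. i \<notin> S \<longrightarrow> w t i = 0"
    and A: "A = (\<lambda>i j. \<Sum>t<N. rank_one (w t) i j)"
    using psd_on_sum_rank_one[OF assms(1,2)] by blast
  have "(\<Sum>t<N. \<Sum>i\<in>S. (cmod (w t i))\<^sup>2) = 0"
    using assms(3) unfolding A tr_on_sum_rank_one by (simp only: of_real_eq_0_iff)
  then have "\<forall>t<N. \<forall>i\<in>S. w t i = 0"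
    using assms(1) by (simp add: sum_nonneg_eq_0_iff sum_nonneg)
  then have "\<forall>t<N. \<forall>i. w t i = 0" using w by blast
  then show ?thesis unfolding A rank_one_def by simp
qed

lemma tr_on_mmult_psd_nonneg:
  assumes "finite S" "psd_on S A" "psd_on S B"
  shows "0 \<le> Re (tr_on S (mmult_on S A B))"
proof -
  obtain N :: nat and w where A: "A = (\<lambda>i j. \<Sum>t<N. rank_one (w t) i j)"
    using psd_on_sum_rank_one[OF assms(1,2)] by blast
  have "tr_on S (mmult_on S (rank_one u) B) = quad_form S B u" for u
    unfolding tr_on_def mmult_on_def quad_form_def rank_one_def sum_distrib_right
    by (subst sum.swap) (simp add: mult_ac)
  then have "tr_on S (mmult_on S A B) = (\<Sum>t<N. quad_form S B (w t))"
    unfolding A mmult_on_sum_left tr_on_sum by simp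
  then show ?thesis using psd_on_quad_form[OF assms(3)] by (simp add: sum_nonneg)
qed

section \<open>Tensor products and local operators\<close>

lemma idx_0: "idx 0 d = {\<lambda>_. 0}"
  unfolding idx_def by auto

lemma idx_Suc: "idx (Suc m) d = (\<lambda>(f, j). f(m := j)) ` (idx m d \<times> {..<d m})"
proof
  show "idx (Suc m) d \<subseteq> (\<lambda>(f, j). f(m := j)) ` (idx m d \<times> {..<d m})"
  proof
    fix g assume g: "g \<in> idx (Suc m) d"
    have "g(m := 0) \<in> idx m d" "g m < d m" using g unfolding idx_def by auto
    then show "g \<in> (\<lambda>(f, j). f(m := j)) ` (idx m d \<times> {..<d m})"
      by (intro image_eqI[where x="(g(m := 0), g m)"]) simp_all
  qed
  show "(\<lambda>(f, j). f(m := j)) ` (idx m d \<times> {..<d m}) \<subseteq> idx (Suc m) d"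
    unfolding idx_def by (auto simp: less_Suc_eq)
qed

lemma inj_on_idx_upd: "inj_on (\<lambda>(f, j). f(m := j)) (idx m d \<times> {..<d m})"
proof (rule inj_onI, clarify)
  fix f j f' j'
  assume h: "f \<in> idx m d" "f' \<in> idx m d" "f(m := j) = f'(m := j')"
  then have "j = j'" by (metis fun_upd_same)
  moreover have "f = f'"
  proof
    fix k show "f k = f' k"
      using h unfolding idx_def by (cases "k = m") (auto dest: fun_cong[where x=k])
  qed
  ultimately show "f = f' \<and> j = j'" by simp
qed

lemma finite_idx: "finite (idx m d)"
  by (induction m) (auto simp: idx_0 idx_Suc)

lemma sum_idx_prod:
  "(\<Sum>f\<in>idx m d. \<Prod>k<m. g k (f k)) = (\<Prod>k<m. \<Sum>j<d k. (g k j :: complex))"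
proof (induction m)
  case 0
  then show ?case by (simp add: idx_0)
next
  case (Suc m)
  have "(\<Sum>f\<in>idx (Suc m) d. \<Prod>k<Suc m. g k (f k))
      = (\<Sum>(f, j)\<in>idx m d \<times> {..<d m}. \<Prod>k<Suc m. g k ((f(m := j)) k))"
    unfolding idx_Suc by (subst sum.reindex[OF inj_on_idx_upd]) (simp add: case_prod_beta)
  also have "\<dots> = (\<Sum>(f, j)\<in>idx m d \<times> {..<d m}. (\<Prod>k<m. g k (f k)) * g m j)"
    by (intro sum.cong refl) (auto intro!: prod.cong)
  also have "\<dots> = (\<Sum>f\<in>idx m d. \<Prod>k<m. g k (f k)) * (\<Sum>j<d m. g m j)"
    unfolding sum_product sum.cartesian_product by (simp add: case_prod_beta)
  finally show ?case using Suc by simp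
qed

lemma tensor_cong: "(\<And>l. l < m \<Longrightarrow> E l = E' l) \<Longrightarrow> tensor m d E = tensor m d E'"
  unfolding tensor_def by (intro ext) (auto intro!: prod.cong)

lemma supp_on_tensor: "supp_on (idx m d) (tensor m d E)"
  unfolding supp_on_def tensor_def by auto

lemma mmult_on_tensor:
  "mmult_on (idx m d) (tensor m d E) (tensor m d F) = tensor m d (\<lambda>k. mmult_on {..<d k} (E k) (F k))"
proof (intro ext)
  fix a b
  show "mmult_on (idx m d) (tensor m d E) (tensor m d F) a b
      = tensor m d (\<lambda>k. mmult_on {..<d k} (E k) (F k)) a b"
  proof (cases "a \<in> idx m d \<and> b \<in> idx m d")
    case True
    have "mmult_on (idx m d) (tensor m d E) (tensor m d F) a b
        = (\<Sum>c\<in>idx m d. \<Prod>k<m. E k (a k) (c k) * F k (c k) (b k))"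
      unfolding mmult_on_def tensor_def using True by (intro sum.cong refl) (simp add: prod.distrib)
    also have "\<dots> = (\<Prod>k<m. \<Sum>j<d k. E k (a k) j * F k j (b k))" by (rule sum_idx_prod)
    also have "\<dots> = tensor m d (\<lambda>k. mmult_on {..<d k} (E k) (F k)) a b"
      unfolding tensor_def mmult_on_def using True by simp
    finally show ?thesis .
  qed (auto simp: mmult_on_def tensor_def)
qed

lemma adj_tensor: "adj (tensor m d E) = tensor m d (\<lambda>k. adj (E k))"
  unfolding adj_def tensor_def by (intro ext) (simp add: cnj_prod conj_commute)

lemma tensor_id_on: "tensor m d (\<lambda>k. id_on {..<d k}) = id_on (idx m d)"
proof (intro ext)
  fix a b
  show "tensor m d (\<lambda>k. id_on {..<d k}) a b = id_on (idx m d) a b"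
  proof (cases "a \<in> idx m d \<and> b \<in> idx m d \<and> a \<noteq> b")
    case True
    then obtain k where "a k \<noteq> b k" by auto
    moreover have "k < m" using True \<open>a k \<noteq> b k\<close> unfolding idx_def by (cases "k < m") auto
    ultimately have "(\<Prod>k<m. id_on {..<d k} (a k) (b k)) = 0"
      by (intro prod_zero bexI[of _ k]) (simp_all add: id_on_def)
    then show ?thesis using True unfolding tensor_def id_on_def by simp
  qed (auto simp: tensor_def id_on_def idx_def)
qed

text \<open>The right-hand side avoids a function update, so the rule can be used by the simplifier.\<close>
lemma tensor_fun_upd:
  assumes "k < m"
  shows "tensor m d (E(k := X)) a b = X (a k) (b k) * tensor m d (\<lambda>l. if l = k then \<lambda>_ _. 1 else E l) a b"
proof -
  have "(\<Prod>l<m. (E(k := Y)) l (a l) (b l)) = Y (a k) (b k) * (\<Prod>l\<in>{..<m}-{k}. E l (a l) (b l))" for Y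
    using assms by (subst prod.remove[of _ k]) (auto intro!: prod.cong)
  then show ?thesis unfolding tensor_def by simp
qed

lemma tensor_fun_upd_sum:
  "k < m \<Longrightarrow> tensor m d (E(k := (\<lambda>a b. \<Sum>t\<in>T. G t a b))) = (\<lambda>a b. \<Sum>t\<in>T. tensor m d (E(k := G t)) a b)"
  by (intro ext) (simp add: tensor_fun_upd[of k m d E] sum_distrib_right)

lemma tensor_fun_upd_scale:
  "k < m \<Longrightarrow> tensor m d (E(k := (\<lambda>a b. c * X a b))) = (\<lambda>a b. c * tensor m d (E(k := X)) a b)"
  by (intro ext) (simp add: tensor_fun_upd[of k m d E])

lemma tensor_fun_upd_zero: "k < m \<Longrightarrow> tensor m d (E(k := (\<lambda>a b. 0))) = (\<lambda>a b. 0)"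
  by (intro ext) (simp add: tensor_fun_upd[of k m d E])

lemma adj_id_on: "adj (id_on S) = id_on S"
  unfolding adj_def id_on_def by (intro ext) auto

lemma local_op_eq_tensor_upd: "local_op m d k K = tensor m d ((\<lambda>l. id_on {..<d l})(k := K))"
  unfolding local_op_def by (rule arg_cong[where f="tensor m d"]) auto

lemma adj_local_op: "adj (local_op m d k K) = local_op m d k (adj K)"
  unfolding local_op_def adj_tensor by (rule arg_cong[where f="tensor m d"]) (auto simp: adj_id_on)

lemma supp_on_local_op: "supp_on (idx m d) (local_op m d k K)"
  unfolding local_op_def by (rule supp_on_tensor)

lemma mmult_on_local_op:
  "mmult_on (idx m d) (local_op m d k A) (local_op m d k B) = local_op m d k (mmult_on {..<d k} A B)"
  unfolding local_op_def mmult_on_tensor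
  by (rule tensor_cong) (auto simp: mmult_on_id_left[OF finite_lessThan supp_on_id_on])

lemma separable_psd: "separable m d \<sigma> \<Longrightarrow> psd_on (idx m d) \<sigma>"
  unfolding separable_def by blast

lemma separable_id_on: "separable m d (id_on (idx m d))"
  unfolding separable_def
proof (intro conjI exI[where x="1::nat"] exI[where x="\<lambda>_ k. id_on {..<d k}"])
  show "id_on (idx m d) = (\<lambda>i j. \<Sum>s<(1::nat). tensor m d ((\<lambda>_ k. id_on {..<d k}) s) i j)"
    by (simp add: tensor_id_on)
qed (simp_all add: psd_on_id_on)

lemma separable_zero: "separable m d (\<lambda>_ _. 0)"
  unfolding separable_def by (intro conjI psd_on_zero exI[where x="0::nat"]) simp_all

lemma separable_scale:
  assumes "separable m d \<sigma>" "0 \<le> c" "0 < m"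
  shows "separable m d (\<lambda>a b. complex_of_real c * \<sigma> a b)"
proof -
  obtain N :: nat and F where F: "\<forall>s<N. \<forall>k<m. psd_on {..<d k} (F s k)"
    and \<sigma>: "\<sigma> = (\<lambda>i j. \<Sum>s<N. tensor m d (F s) i j)"
    using assms(1) unfolding separable_def by blast
  define G where "G s = (F s)(0 := (\<lambda>a b. complex_of_real c * F s 0 a b))" for s
  have "\<forall>s<N. \<forall>k<m. psd_on {..<d k} (G s k)"
    unfolding G_def using F assms(2,3) by (auto intro: psd_on_scale)
  moreover have "tensor m d (G s) = (\<lambda>a b. complex_of_real c * tensor m d (F s) a b)" for s
    unfolding G_def tensor_fun_upd_scale[OF assms(3)] by simp
  then have "(\<lambda>a b. complex_of_real c * \<sigma> a b) = (\<lambda>i j. \<Sum>s<N. tensor m d (G s) i j)"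
    unfolding \<sigma> by (simp add: sum_distrib_left)
  ultimately show ?thesis
    using psd_on_scale[OF separable_psd[OF assms(1)] assms(2)] unfolding separable_def by blast
qed

lemma separable_add:
  assumes "separable m d A" "separable m d B"
  shows "separable m d (\<lambda>a b. A a b + B a b)"
proof -
  obtain N :: nat and F where F: "\<forall>s<N. \<forall>k<m. psd_on {..<d k} (F s k)"
    and A: "A = (\<lambda>i j. \<Sum>s<N. tensor m d (F s) i j)"
    using assms(1) unfolding separable_def by blast
  obtain N' :: nat and F' where F': "\<forall>s<N'. \<forall>k<m. psd_on {..<d k} (F' s k)"
    and B: "B = (\<lambda>i j. \<Sum>s<N'. tensor m d (F' s) i j)"
    using assms(2) unfolding separable_def by blast
  define G where "G s = (if s < N then F s else F' (s - N))" for s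
  have "\<forall>s<N + N'. \<forall>k<m. psd_on {..<d k} (G s k)" unfolding G_def using F F' by auto
  moreover have "(\<lambda>a b. A a b + B a b) = (\<lambda>i j. \<Sum>s<N + N'. tensor m d (G s) i j)"
  proof (intro ext)
    fix i j
    have "(\<Sum>s<N + N'. tensor m d (G s) i j)
        = (\<Sum>s<N. tensor m d (G s) i j) + (\<Sum>s<N'. tensor m d (G (s + N)) i j)"
      unfolding lessThan_atLeast0 sum.atLeastLessThan_concat[of 0 N "N + N'", symmetric, simplified]
      using sum.shift_bounds_nat_ivl[of "\<lambda>s. tensor m d (G s) i j" 0 N N'] by (simp add: add.commute)
    then show "A i j + B i j = (\<Sum>s<N + N'. tensor m d (G s) i j)"
      unfolding A B G_def by simp
  qed
  ultimately show ?thesis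
    using psd_on_add[OF separable_psd[OF assms(1)] separable_psd[OF assms(2)]]
    unfolding separable_def by blast
qed

lemma separable_sum:
  fixes r :: nat
  shows "(\<And>j. j < r \<Longrightarrow> separable m d (G j)) \<Longrightarrow> separable m d (\<lambda>a b. \<Sum>j<r. G j a b)"
  by (induction r) (simp_all add: separable_zero separable_add)

lemma separable_conj_local_op:
  assumes "k < m" "supp_on {..<d k} K" "separable m d \<sigma>"
  shows "separable m d
    (mmult_on (idx m d) (mmult_on (idx m d) (adj (local_op m d k K)) \<sigma>) (local_op m d k K))"
proof -
  let ?S = "idx m d" and ?L = "local_op m d k K"
  obtain N :: nat and F where F: "\<forall>s<N. \<forall>k<m. psd_on {..<d k} (F s k)"
    and \<sigma>: "\<sigma> = (\<lambda>i j. \<Sum>s<N. tensor m d (F s) i j)"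
    using assms(3) unfolding separable_def by blast
  define G where "G s = (F s)(k := mmult_on {..<d k} (mmult_on {..<d k} (adj K) (F s k)) K)" for s
  have "\<forall>s<N. \<forall>l<m. psd_on {..<d l} (G s l)"
    unfolding G_def using F assms(2) by (auto intro: psd_on_conj)
  moreover have "mmult_on ?S (mmult_on ?S (adj ?L) (tensor m d (F s))) ?L = tensor m d (G s)"
    if s: "s < N" for s
    unfolding adj_local_op unfolding local_op_def mmult_on_tensor
  proof (rule tensor_cong)
    fix l assume "l < m"
    then have "supp_on {..<d l} (F s l)" using F s psd_on_supp by blast
    then show "mmult_on {..<d l} (mmult_on {..<d l} (if l = k then adj K else id_on {..<d l}) (F s l))
        (if l = k then K else id_on {..<d l}) = G s l"
      unfolding G_def
      by (auto simp: adj_id_on mmult_on_id_left[OF finite_lessThan] mmult_on_id_right[OF finite_lessThan])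
  qed
  then have "mmult_on ?S (mmult_on ?S (adj ?L) \<sigma>) ?L = (\<lambda>i j. \<Sum>s<N. tensor m d (G s) i j)"
    unfolding \<sigma> mmult_on_sum_right mmult_on_sum_left by auto
  ultimately show ?thesis
    using psd_on_conj[OF separable_psd[OF assms(3)] supp_on_local_op] unfolding separable_def by blast
qed

lemma block_positive_tr_nonneg:
  assumes "0 < m" "block_positive m d X" "separable m d \<sigma>"
  shows "0 \<le> Re (tr_on (idx m d) (mmult_on (idx m d) X \<sigma>))"
proof -
  let ?S = "idx m d"
  define c where "c = Re (tr_on ?S \<sigma>)"
  have tr: "tr_on ?S \<sigma> = of_real c" "0 \<le> c"
    using tr_on_psd[OF finite_idx separable_psd[OF assms(3)]] unfolding c_def by auto
  show ?thesis
  proof (cases "c = 0")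
    case True
    then show ?thesis
      using psd_on_tr_zero[OF finite_idx separable_psd[OF assms(3)]] tr(1) by simp
  next
    case False
    define \<sigma>' where "\<sigma>' = (\<lambda>a b. complex_of_real (1 / c) * \<sigma> a b)"
    have "separable m d \<sigma>'"
      unfolding \<sigma>'_def by (intro separable_scale[OF assms(3) _ assms(1)]) (use tr(2) in simp)
    moreover have "tr_on ?S \<sigma>' = 1" unfolding \<sigma>'_def tr_on_scale tr(1) using False by simp
    ultimately have "0 \<le> Re (tr_on ?S (mmult_on ?S X \<sigma>'))"
      using assms(2) unfolding block_positive_def by blast
    then show ?thesis
      unfolding \<sigma>'_def mmult_on_scale_right tr_on_scale using tr(2) False
      by (simp add: zero_le_divide_iff)
  qed
qed

section \<open>LOCC measurements are separable\<close>

lemma locc_sum_eq_id_on: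
  assumes "M \<in> locc m d n"
  shows "(\<lambda>a b. \<Sum>y<n. M y a b) = id_on (idx m d)"
  using assms
proof (induction rule: locc.induct)
  case (outcome i)
  have "(\<Sum>y<n. (if y = i then id_on (idx m d) else (\<lambda>_ _. 0)) a b) = id_on (idx m d) a b" for a b
    using outcome by (simp add: if_distrib[where f="\<lambda>X. X a b"] cong: if_cong)
  then show ?case by (intro ext)
next
  case (step k r K F)
  let ?S = "idx m d" and ?L = "\<lambda>j. local_op m d k (K j)"
  have "(\<lambda>a b. \<Sum>y<n. \<Sum>j<r. mmult_on ?S (mmult_on ?S (adj (?L j)) (F j y)) (?L j) a b)
      = (\<lambda>a b. \<Sum>j<r. mmult_on ?S (mmult_on ?S (adj (?L j)) (\<lambda>a b. \<Sum>y<n. F j y a b)) (?L j) a b)"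
    unfolding mmult_on_sum_right mmult_on_sum_left by (intro ext sum.swap)
  also have "\<dots> = (\<lambda>a b. \<Sum>j<r. local_op m d k (mmult_on {..<d k} (adj (K j)) (K j)) a b)"
    using step.IH
    by (simp add: adj_local_op mmult_on_id_right[OF finite_idx supp_on_local_op] mmult_on_local_op)
  also have "\<dots> = tensor m d ((\<lambda>l. id_on {..<d l})(k := id_on {..<d k}))"
    unfolding local_op_eq_tensor_upd tensor_fun_upd_sum[OF step.hyps(1), symmetric] step.hyps(3) ..
  also have "\<dots> = tensor m d (\<lambda>l. id_on {..<d l})" by (rule arg_cong[where f="tensor m d"]) auto
  finally show ?case unfolding tensor_id_on .
qed

lemma locc_separable:
  assumes "M \<in> locc m d n"
  shows "separable m d (M i)"
  using assms
proof (induction rule: locc.induct)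
  case (outcome i)
  then show ?case by (simp add: separable_id_on separable_zero)
next
  case (step k r K F)
  then show ?case by (intro separable_sum separable_conj_local_op) simp_all
qed

lemma locc_sep_measurement: "M \<in> locc m d n \<Longrightarrow> sep_measurement m d n M"
  unfolding sep_measurement_def measurement_def
  using locc_separable locc_sum_eq_id_on separable_psd by blast

lemma success_le_one:
  assumes "ensemble m d n \<eta> \<rho>" "measurement m d n M"
  shows "success m d n \<eta> \<rho> M \<le> 1"
proof -
  let ?S = "idx m d"
  let ?p = "\<lambda>j i. \<eta> j * Re (tr_on ?S (mmult_on ?S (\<rho> j) (M i)))"
  have \<eta>: "\<forall>j<n. 0 < \<eta> j" "(\<Sum>j<n. \<eta> j) = 1"
    and \<rho>: "\<forall>j<n. psd_on ?S (\<rho> j) \<and> tr_on ?S (\<rho> j) = 1"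
    using assms(1) unfolding ensemble_def is_state_def by auto
  have M: "\<forall>i<n. psd_on ?S (M i)" "(\<lambda>a b. \<Sum>i<n. M i a b) = id_on ?S"
    using assms(2) unfolding measurement_def by auto
  have "?p i i \<le> (\<Sum>j<n. ?p j i)" if "i < n" for i
    using that \<eta>(1) \<rho> M(1) tr_on_mmult_psd_nonneg[OF finite_idx]
    by (intro member_le_sum) (simp_all add: less_imp_le)
  then have "success m d n \<eta> \<rho> M \<le> (\<Sum>i<n. \<Sum>j<n. ?p j i)"
    unfolding success_def by (rule sum_mono) simp
  also have "\<dots> = (\<Sum>j<n. \<eta> j * Re (\<Sum>i<n. tr_on ?S (mmult_on ?S (\<rho> j) (M i))))"
    by (subst sum.swap) (simp add: Re_sum sum_distrib_left)
  also have "\<dots> = (\<Sum>j<n. \<eta> j)"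
    using \<rho> by (simp add: tr_on_mmult_sum_eq_id[OF finite_idx M(2)])
  finally show ?thesis using \<eta>(2) by simp
qed

definition weighted_diff :: "(nat \<Rightarrow> real) \<Rightarrow> (nat \<Rightarrow> 'a mat) \<Rightarrow> nat \<Rightarrow> nat \<Rightarrow> 'a mat" where
  "weighted_diff \<eta> \<rho> x i = (\<lambda>a b. of_real (\<eta> x) * \<rho> x a b - of_real (\<eta> i) * \<rho> i a b)"

lemma sum_tr_weighted_diff:
  assumes "(\<lambda>a b. \<Sum>y<n. M y a b) = id_on (idx m d)" "tr_on (idx m d) (\<rho> x) = 1"
  shows "(\<Sum>y<n. Re (tr_on (idx m d) (mmult_on (idx m d) (weighted_diff \<eta> \<rho> x y) (M y))))
    = \<eta> x - success m d n \<eta> \<rho> M"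
proof -
  let ?S = "idx m d"
  have "(\<Sum>y<n. Re (tr_on ?S (mmult_on ?S (weighted_diff \<eta> \<rho> x y) (M y))))
      = \<eta> x * Re (\<Sum>y<n. tr_on ?S (mmult_on ?S (\<rho> x) (M y))) - success m d n \<eta> \<rho> M"
    unfolding weighted_diff_def tr_on_mmult_combination success_def
    by (simp add: Re_sum sum_subtractf sum_distrib_left)
  then show ?thesis unfolding tr_on_mmult_sum_eq_id[OF finite_idx assms(1)] assms(2) by simp
qed

lemma success_le_if_block_positive:
  assumes "0 < m" "tr_on (idx m d) (\<rho> x) = 1"
    and "\<forall>i<n. block_positive m d (weighted_diff \<eta> \<rho> x i)" "sep_measurement m d n M"
  shows "success m d n \<eta> \<rho> M \<le> \<eta> x"
proof -
  have M: "(\<lambda>a b. \<Sum>y<n. M y a b) = id_on (idx m d)" "\<forall>y<n. separable m d (M y)"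
    using assms(4) unfolding sep_measurement_def measurement_def by auto
  have "0 \<le> (\<Sum>y<n. Re (tr_on (idx m d) (mmult_on (idx m d) (weighted_diff \<eta> \<rho> x y) (M y))))"
    using block_positive_tr_nonneg[OF assms(1)] assms(3) M(2) by (intro sum_nonneg) simp
  then show ?thesis unfolding sum_tr_weighted_diff[where \<eta>=\<eta> and \<rho>=\<rho> and x=x, OF M(1) assms(2)] by simp
qed

lemma success_constant_guess:
  assumes "ensemble m d n \<eta> \<rho>" "x < n"
  shows "success m d n \<eta> \<rho> (\<lambda>j. if j = x then id_on (idx m d) else (\<lambda>_ _. 0)) = \<eta> x"
proof -
  have "tr_on (idx m d) (\<rho> x) = 1" using assms unfolding ensemble_def is_state_def by blast
  then have "\<eta> i * Re (tr_on (idx m d) (mmult_on (idx m d) (\<rho> i)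
      (if i = x then id_on (idx m d) else (\<lambda>_ _. 0)))) = (if i = x then \<eta> x else 0)" for i
    by (simp add: tr_on_mmult_id[OF finite_idx])
  then show ?thesis using assms(2) unfolding success_def by simp
qed

section \<open>Product rank-one witnesses\<close>

lemma tr_on_mmult_sum_neg:
  assumes "Re (tr_on S (mmult_on S D (\<lambda>a b. \<Sum>t<N. X t a b))) < 0"
  obtains t where "t < (N::nat)" "Re (tr_on S (mmult_on S D (X t))) < 0"
proof -
  have "(\<Sum>t<N. Re (tr_on S (mmult_on S D (X t)))) < 0"
    using assms unfolding mmult_on_sum_right tr_on_sum Re_sum .
  then show ?thesis using that by (metis (no_types, lifting) lessThan_iff not_less sum_nonneg)
qed

definition unit_vec :: "nat \<Rightarrow> (nat \<Rightarrow> complex) \<Rightarrow> bool" where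
  "unit_vec n u \<longleftrightarrow> (\<forall>i. n \<le> i \<longrightarrow> u i = 0) \<and> (\<Sum>i<n. cnj (u i) * u i) = 1"

lemma rank_one_normalize:
  assumes "\<forall>i. n \<le> i \<longrightarrow> v i = 0"
  obtains "rank_one v = (\<lambda>_ _. 0)"
    | u c where "unit_vec n u" "0 < c" "rank_one v = (\<lambda>a b. of_real c * rank_one u a b)"
proof (cases "\<forall>i<n. v i = 0")
  case True
  then have "v = (\<lambda>_. 0)" using assms by (metis not_less)
  then have "rank_one v = (\<lambda>_ _. 0)" unfolding rank_one_def by simp
  then show ?thesis using that(1) by blast
next
  case False
  define c where "c = (\<Sum>i<n. (cmod (v i))\<^sup>2)"
  obtain i where "i < n" "v i \<noteq> 0" using False by blast
  then have "0 < c" unfolding c_def by (intro sum_pos2[of _ i]) auto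
  define u where "u i = v i / of_real (sqrt c)" for i
  have "unit_vec n u"
    unfolding unit_vec_def
  proof
    show "\<forall>i. n \<le> i \<longrightarrow> u i = 0" unfolding u_def using assms by simp
    have "(\<Sum>i<n. cnj (u i) * u i) = (\<Sum>i<n. cnj (v i) * v i) / of_real c"
      unfolding u_def using \<open>0 < c\<close>
      by (simp add: sum_divide_distrib of_real_mult[symmetric] del: of_real_mult)
    also have "(\<Sum>i<n. cnj (v i) * v i) = of_real c"
      unfolding c_def of_real_sum complex_norm_square by (simp add: mult.commute)
    finally show "(\<Sum>i<n. cnj (u i) * u i) = 1" using \<open>0 < c\<close> by simp
  qed
  moreover have "rank_one v = (\<lambda>a b. of_real c * rank_one u a b)"
    unfolding rank_one_def u_def using \<open>0 < c\<close>
    by (simp add: of_real_mult[symmetric] del: of_real_mult)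
  ultimately show ?thesis using that(2) \<open>0 < c\<close> by blast
qed

lemma tensor_neg_slot_rank_one:
  assumes "j < m" "psd_on {..<d j} (G j)"
    and "Re (tr_on (idx m d) (mmult_on (idx m d) D (tensor m d G))) < 0"
  obtains u where "unit_vec (d j) u"
    "Re (tr_on (idx m d) (mmult_on (idx m d) D (tensor m d (G(j := rank_one u))))) < 0"
proof -
  let ?S = "idx m d" and ?val = "\<lambda>X. Re (tr_on (idx m d) (mmult_on (idx m d) D (tensor m d (G(j := X)))))"
  obtain N :: nat and w where w: "\<forall>t<N. \<forall>i. i \<notin> {..<d j} \<longrightarrow> w t i = 0"
    and Gj: "G j = (\<lambda>a b. \<Sum>t<N. rank_one (w t) a b)"
    using psd_on_sum_rank_one[OF finite_lessThan assms(2)] by blast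
  have "tensor m d G = (\<lambda>a b. \<Sum>t<N. tensor m d (G(j := rank_one (w t))) a b)"
    using tensor_fun_upd_sum[OF assms(1), of d G "\<lambda>t. rank_one (w t)" "{..<N}"] Gj[symmetric] by simp
  then obtain t where t: "t < N" "?val (rank_one (w t)) < 0"
    using assms(3) tr_on_mmult_sum_neg by metis
  then have supp: "\<forall>i. d j \<le> i \<longrightarrow> w t i = 0" using w by simp
  show ?thesis
  proof (cases rule: rank_one_normalize[OF supp])
    case 1
    then show ?thesis using t(2) tensor_fun_upd_zero[OF assms(1)] by simp
  next
    case (2 u c)
    then have "?val (rank_one (w t)) = c * ?val (rank_one u)"
      by (simp add: tensor_fun_upd_scale[OF assms(1)] mmult_on_scale_right tr_on_scale)
    then show ?thesis using that 2 t(2) by (simp add: mult_less_0_iff)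
  qed
qed

lemma tensor_neg_product_rank_one:
  assumes "\<forall>l<m. psd_on {..<d l} (G l)"
    and "Re (tr_on (idx m d) (mmult_on (idx m d) D (tensor m d G))) < 0"
  obtains U where "\<forall>l<m. unit_vec (d l) (U l)"
    "Re (tr_on (idx m d) (mmult_on (idx m d) D (tensor m d (\<lambda>l. rank_one (U l))))) < 0"
proof -
  let ?neg = "\<lambda>G. Re (tr_on (idx m d) (mmult_on (idx m d) D (tensor m d G))) < 0"
  have "\<exists>U G'. (\<forall>l<m. psd_on {..<d l} (G' l)) \<and>
      (\<forall>l<j. unit_vec (d l) (U l) \<and> G' l = rank_one (U l)) \<and> ?neg G'" if "j \<le> m" for j
    using that
  proof (induction j)
    case 0
    then show ?case using assms by blast
  next
    case (Suc j)
    then obtain U G' where G': "\<forall>l<m. psd_on {..<d l} (G' l)"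
      "\<forall>l<j. unit_vec (d l) (U l) \<and> G' l = rank_one (U l)" "?neg G'"
      by auto
    obtain u where u: "unit_vec (d j) u" "?neg (G'(j := rank_one u))"
      using tensor_neg_slot_rank_one[of j m d G' D] Suc.prems G' by auto
    have "psd_on {..<d j} (rank_one u)"
      using u(1) unfolding unit_vec_def by (intro psd_on_rank_one) simp
    then have "\<forall>l<m. psd_on {..<d l} ((G'(j := rank_one u)) l)" using G'(1) by simp
    moreover have "\<forall>l<Suc j. unit_vec (d l) ((U(j := u)) l) \<and> (G'(j := rank_one u)) l = rank_one ((U(j := u)) l)"
      using G'(2) u(1) by (simp add: less_Suc_eq)
    ultimately show ?case using u(2) by blast
  qed
  then obtain U G' where "\<forall>l<m. unit_vec (d l) (U l) \<and> G' l = rank_one (U l)" "?neg G'"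
    by blast
  moreover from this(1) have "tensor m d G' = tensor m d (\<lambda>l. rank_one (U l))"
    by (intro tensor_cong) simp
  ultimately show ?thesis using that by auto
qed

section \<open>Measuring a product projection by LOCC\<close>

lemma supp_on_rank_one_unit_vec: "unit_vec n u \<Longrightarrow> supp_on {..<n} (rank_one u)"
  unfolding unit_vec_def supp_on_def rank_one_def by auto

lemma adj_rank_one: "adj (rank_one u) = rank_one u"
  unfolding adj_def rank_one_def by (intro ext) simp

lemma rank_one_idem:
  assumes "unit_vec n u"
  shows "mmult_on {..<n} (rank_one u) (rank_one u) = rank_one u"
proof (intro ext)
  fix a b
  have "mmult_on {..<n} (rank_one u) (rank_one u) a b = u a * cnj (u b) * (\<Sum>l<n. cnj (u l) * u l)"
    unfolding mmult_on_def rank_one_def by (simp add: sum_distrib_left mult_ac)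
  then show "mmult_on {..<n} (rank_one u) (rank_one u) a b = rank_one u a b"
    using assms unfolding unit_vec_def rank_one_def by simp
qed

lemma projective_instrument:
  assumes "unit_vec n u"
  defines "K \<equiv> \<lambda>t::nat. if t = 0 then rank_one u else (\<lambda>a b. id_on {..<n} a b - rank_one u a b)"
  shows "\<forall>t<2. supp_on {..<n} (K t)"
    and "(\<lambda>a b. \<Sum>t<2. mmult_on {..<n} (adj (K t)) (K t) a b) = id_on {..<n}"
proof -
  let ?P = "rank_one u" and ?Q = "\<lambda>a b. id_on {..<n} a b - rank_one u a b"
  have P: "supp_on {..<n} ?P" "adj ?P = ?P" "mmult_on {..<n} ?P ?P = ?P"
    using supp_on_rank_one_unit_vec adj_rank_one rank_one_idem assms(1) by auto
  have Q: "supp_on {..<n} ?Q" "adj ?Q = ?Q"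
    using P(1) unfolding supp_on_def adj_def id_on_def rank_one_def by (auto intro!: ext)
  have "mmult_on {..<n} ?P ?Q = (\<lambda>a b. 0)"
    unfolding mmult_on_diff_right mmult_on_id_right[OF finite_lessThan P(1)] P(3) by simp
  then have "mmult_on {..<n} ?Q ?Q = ?Q"
    unfolding mmult_on_diff_left[of _ "id_on {..<n}" ?P] mmult_on_id_left[OF finite_lessThan Q(1)]
    by simp
  then show "(\<lambda>a b. \<Sum>t<2. mmult_on {..<n} (adj (K t)) (K t) a b) = id_on {..<n}"
    unfolding K_def by (simp add: numeral_2_eq_2 P Q(2))
  show "\<forall>t<2. supp_on {..<n} (K t)" unfolding K_def using P(1) Q(1) by simp
qed

lemma conj_local_op_tensor:
  assumes "k < m" "\<forall>l<m. supp_on {..<d l} (F l)"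
  shows "mmult_on (idx m d) (mmult_on (idx m d) (local_op m d k A) (tensor m d F)) (local_op m d k B)
    = tensor m d (F(k := mmult_on {..<d k} (mmult_on {..<d k} A (F k)) B))"
  unfolding local_op_def mmult_on_tensor
  using assms(2) by (intro tensor_cong)
    (simp add: mmult_on_id_left[OF finite_lessThan] mmult_on_id_right[OF finite_lessThan])

text \<open>Party \<open>k\<close> measures the projection onto \<open>u\<close>; on success the parties continue with \<open>M\<close>,
  otherwise they output \<open>x\<close>.\<close>
lemma locc_measure_projection:
  assumes "k < m" "unit_vec (d k) u" "x < n" "M \<in> locc m d n"
  shows "\<exists>M' \<in> locc m d n. \<forall>y. y \<noteq> x \<longrightarrow> M' y = mmult_on (idx m d)
    (mmult_on (idx m d) (local_op m d k (rank_one u)) (M y)) (local_op m d k (rank_one u))"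
proof -
  let ?S = "idx m d"
  define K where "K = (\<lambda>t::nat. if t = 0 then rank_one u else (\<lambda>a b. id_on {..<d k} a b - rank_one u a b))"
  define F where "F = (\<lambda>t::nat. if t = 0 then M else (\<lambda>y. if y = x then id_on ?S else (\<lambda>_ _. 0)))"
  define M' where "M' = (\<lambda>y a b. \<Sum>t<2. mmult_on ?S
    (mmult_on ?S (adj (local_op m d k (K t))) (F t y)) (local_op m d k (K t)) a b)"
  have "M' \<in> locc m d n"
    unfolding M'_def using assms projective_instrument[OF assms(2)]
    by (intro locc.step) (simp_all add: F_def K_def locc.outcome)
  moreover have "M' y = mmult_on ?S (mmult_on ?S (local_op m d k (rank_one u)) (M y))
      (local_op m d k (rank_one u))" if "y \<noteq> x" for y
    using that unfolding M'_def F_def K_def by (simp add: numeral_2_eq_2 adj_local_op adj_rank_one)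
  ultimately show ?thesis by blast
qed

lemma locc_product_projection:
  assumes "\<forall>l<m. unit_vec (d l) (U l)" "i < n" "x < n" "i \<noteq> x"
  shows "\<exists>M \<in> locc m d n. M i = tensor m d (\<lambda>l. rank_one (U l)) \<and> (\<forall>y. y \<noteq> i \<and> y \<noteq> x \<longrightarrow> M y = (\<lambda>_ _. 0))"
proof -
  define T where "T q = tensor m d (\<lambda>l. if l < q then id_on {..<d l} else rank_one (U l))" for q
  have "\<exists>M \<in> locc m d n. M i = T q \<and> (\<forall>y. y \<noteq> i \<and> y \<noteq> x \<longrightarrow> M y = (\<lambda>_ _. 0))" if "q \<le> m" for q
    using that
  proof (induction rule: inc_induct)
    case base
    have "T m = id_on (idx m d)" unfolding T_def tensor_id_on[symmetric] by (rule tensor_cong) simp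
    then show ?case by (intro bexI[OF _ locc.outcome[OF assms(2)]]) auto
  next
    case (step q)
    then obtain M where M: "M \<in> locc m d n" "M i = T (Suc q)"
      "\<forall>y. y \<noteq> i \<and> y \<noteq> x \<longrightarrow> M y = (\<lambda>_ _. 0)" by blast
    obtain M' where M': "M' \<in> locc m d n" "\<forall>y. y \<noteq> x \<longrightarrow> M' y = mmult_on (idx m d)
        (mmult_on (idx m d) (local_op m d q (rank_one (U q))) (M y)) (local_op m d q (rank_one (U q)))"
      using locc_measure_projection[OF step.hyps(2) _ assms(3) M(1)] assms(1) step.hyps(2) by blast
    have supp: "\<forall>l<m. supp_on {..<d l} (if l < Suc q then id_on {..<d l} else rank_one (U l))"
      using assms(1) by (simp add: supp_on_id_on supp_on_rank_one_unit_vec)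
    have "mmult_on (idx m d) (mmult_on (idx m d) (local_op m d q (rank_one (U q))) (T (Suc q)))
        (local_op m d q (rank_one (U q))) = T q"
      unfolding T_def conj_local_op_tensor[OF step.hyps(2) supp] using assms(1) step.hyps(2)
      by (intro tensor_cong) (auto simp: mmult_on_id_right[OF finite_lessThan] supp_on_rank_one_unit_vec
          rank_one_idem)
    then have "M' i = T q" using M'(2) M(2) assms(4) by simp
    moreover have "\<forall>y. y \<noteq> i \<and> y \<noteq> x \<longrightarrow> M' y = (\<lambda>_ _. 0)"
      using M'(2) M(3) unfolding mmult_on_def by simp
    ultimately show ?case using M'(1) by blast
  qed
  moreover have "T 0 = tensor m d (\<lambda>l. rank_one (U l))" unfolding T_def by simp
  ultimately show ?thesis by force
qed

lemma weighted_diff_self [simp]: "weighted_diff \<eta> \<rho> x x = (\<lambda>_ _. 0)"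
  unfolding weighted_diff_def by simp

lemma herm_on_weighted_diff:
  assumes "psd_on S (\<rho> x)" "psd_on S (\<rho> i)"
  shows "herm_on S (weighted_diff \<eta> \<rho> x i)"
  using psd_on_supp[OF assms(1)] psd_on_supp[OF assms(2)] psd_on_cnj[OF assms(1)] psd_on_cnj[OF assms(2)]
  unfolding herm_on_def supp_on_def weighted_diff_def by simp

lemma exists_locc_success_gt:
  assumes "ensemble m d n \<eta> \<rho>" "x < n" "y < n"
    and "\<not> block_positive m d (weighted_diff \<eta> \<rho> x y)"
  shows "\<exists>M \<in> locc m d n. \<eta> x < success m d n \<eta> \<rho> M"
proof -
  let ?S = "idx m d" and ?D = "weighted_diff \<eta> \<rho> x"
  let ?val = "\<lambda>z X. Re (tr_on ?S (mmult_on ?S (?D z) X))"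
  have \<rho>: "psd_on ?S (\<rho> x)" "psd_on ?S (\<rho> y)" "tr_on ?S (\<rho> x) = 1"
    using assms(1-3) unfolding ensemble_def is_state_def by auto
  obtain \<sigma> where \<sigma>: "separable m d \<sigma>" "?val y \<sigma> < 0"
    using assms(4) herm_on_weighted_diff[OF \<rho>(1,2)] unfolding block_positive_def by force
  then have "y \<noteq> x" by auto
  obtain N :: nat and F where F: "\<forall>s<N. \<forall>k<m. psd_on {..<d k} (F s k)"
    and \<sigma>_eq: "\<sigma> = (\<lambda>i j. \<Sum>s<N. tensor m d (F s) i j)"
    using \<sigma>(1) unfolding separable_def by blast
  obtain s where s: "s < N" "?val y (tensor m d (F s)) < 0"
    using \<sigma>(2) unfolding \<sigma>_eq by (rule tr_on_mmult_sum_neg)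
  obtain U where U: "\<forall>l<m. unit_vec (d l) (U l)" "?val y (tensor m d (\<lambda>l. rank_one (U l))) < 0"
  proof (rule tensor_neg_product_rank_one)
    show "\<forall>l<m. psd_on {..<d l} (F s l)" using F s(1) by blast
  qed (rule s(2))
  obtain M where M: "M \<in> locc m d n" "M y = tensor m d (\<lambda>l. rank_one (U l))"
    "\<forall>z. z \<noteq> y \<and> z \<noteq> x \<longrightarrow> M z = (\<lambda>_ _. 0)"
    using locc_product_projection[OF U(1) assms(3,2) \<open>y \<noteq> x\<close>] by blast
  have "?val z (M z) = (if z = y then ?val y (M y) else 0)" for z
    using M(3) \<open>y \<noteq> x\<close> by (cases "z = x") simp_all
  then have "(\<Sum>z<n. ?val z (M z)) = (\<Sum>z<n. if z = y then ?val y (M y) else 0)"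
    by (intro sum.cong refl)
  also have "\<dots> = ?val y (M y)" using assms(3) by simp
  finally have "(\<Sum>z<n. ?val z (M z)) = ?val y (M y)" .
  then have "\<eta> x - success m d n \<eta> \<rho> M < 0"
    using U(2) M(2) sum_tr_weighted_diff[where \<eta>=\<eta> and \<rho>=\<rho> and x=x, OF locc_sum_eq_id_on[OF M(1)] \<rho>(3)] by simp
  then show ?thesis using M(1) by auto
qed

lemma p_L_p_SEP_eq_if_block_positive:
  assumes "0 < m" "ensemble m d n \<eta> \<rho>" "x < n"
    and "\<forall>i<n. block_positive m d (weighted_diff \<eta> \<rho> x i)"
  shows "p_L m d n \<eta> \<rho> = \<eta> x" "p_SEP m d n \<eta> \<rho> = \<eta> x"
proof -
  define M where "M = (\<lambda>j. if j = x then id_on (idx m d) else (\<lambda>_ _. (0::complex)))"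
  have M: "M \<in> locc m d n" "sep_measurement m d n M" "success m d n \<eta> \<rho> M = \<eta> x"
    unfolding M_def using locc.outcome[OF assms(3)] locc_sep_measurement success_constant_guess[OF assms(2,3)]
    by blast+
  have le: "success m d n \<eta> \<rho> M' \<le> \<eta> x" if "sep_measurement m d n M'" for M'
    using success_le_if_block_positive[OF assms(1) _ assms(4) that] assms(2,3)
    unfolding ensemble_def is_state_def by blast
  show "p_L m d n \<eta> \<rho> = \<eta> x"
    unfolding p_L_def locc_measurement_def using M le locc_sep_measurement
    by (intro cSup_eq_maximum) force+
  show "p_SEP m d n \<eta> \<rho> = \<eta> x"
    unfolding p_SEP_def using M le by (intro cSup_eq_maximum) force+
qed

lemma p_L_gt_if_not_block_positive:
  assumes "ensemble m d n \<eta> \<rho>" "x < n" "y < n"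
    and "\<not> block_positive m d (weighted_diff \<eta> \<rho> x y)"
  shows "\<eta> x < p_L m d n \<eta> \<rho>"
proof -
  obtain M where M: "M \<in> locc m d n" "\<eta> x < success m d n \<eta> \<rho> M"
    using exists_locc_success_gt[OF assms] by blast
  have bdd: "bdd_above (success m d n \<eta> \<rho> ` {M. locc_measurement m d n M})"
    using success_le_one[OF assms(1)] locc_sep_measurement
    unfolding locc_measurement_def sep_measurement_def by (intro bdd_aboveI[of _ 1]) blast
  have "success m d n \<eta> \<rho> M \<le> p_L m d n \<eta> \<rho>"
    unfolding p_L_def using M(1) by (intro cSup_upper[OF _ bdd]) (simp add: locc_measurement_def)
  then show ?thesis using M(2) by simp
qed

theorem theorem1:
  fixes m n :: nat and d :: "nat \<Rightarrow> nat" and \<eta> :: "nat \<Rightarrow> real"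
    and \<rho> :: "nat \<Rightarrow> (nat \<Rightarrow> nat) mat" and x :: nat
  assumes "m \<ge> 2" and "\<forall>k<m. d k \<ge> 2"
    and "ensemble m d n \<eta> \<rho>"
    and "x < n"
  shows "(p_L m d n \<eta> \<rho> = \<eta> x \<longleftrightarrow>
           (\<forall>i<n. block_positive m d (\<lambda>a b. complex_of_real (\<eta> x) * \<rho> x a b
                                           - complex_of_real (\<eta> i) * \<rho> i a b)))
         \<and> (p_L m d n \<eta> \<rho> = \<eta> x \<longrightarrow> p_L m d n \<eta> \<rho> = p_SEP m d n \<eta> \<rho>)"
proof (cases "\<forall>i<n. block_positive m d (weighted_diff \<eta> \<rho> x i)")
  case True
  moreover have "0 < m" using assms(1) by simp
  ultimately show ?thesis
    using p_L_p_SEP_eq_if_block_positive[OF _ assms(3,4)] unfolding weighted_diff_def by simp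
next
  case False
  then obtain y where "y < n" "\<not> block_positive m d (weighted_diff \<eta> \<rho> x y)" by blast
  then have "p_L m d n \<eta> \<rho> \<noteq> \<eta> x" using p_L_gt_if_not_block_positive[OF assms(3,4)] by force
  then show ?thesis using False unfolding weighted_diff_def by simp
qed

end
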